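(* Let $X\in\mathbb{C}$ be an imaginary quadratic algebraic number such that $X$ is an $\mathbb{S}[\pm1]$-generator of the subring $\mathbb{Z}[X]\subset\mathbb{C}$, i.e. every element of $\mathbb{Z}[X]$ can be written uniquely as a finite sum $\sum_j\alpha_jX^j$ with $\alpha_j\in\{-1,0,1\}$. Then $\mathbb{Q}(X)$ is one of $\mathbb{Q}(\sqrt{-2})$, $\mathbb{Q}(\sqrt{-3})$, $\mathbb{Q}(\sqrt{-11})$. Moreover all three occur: $1+\sqrt{-2}$ is an $\mathbb{S}[\pm1]$-generator of $\mathbb{Z}[\sqrt{-2}]$ (the ring of integers of $\mathbb{Q}(\sqrt{-2})$), $\sqrt{-3}$ is an $\mathbb{S}[\pm1]$-generator of $\mathbb{Z}[\sqrt{-3}]$, and $\frac12(1+\sqrt{-11})$ is an $\mathbb{S}[\pm1]$-generator of the ring of integers of $\mathbb{Q}(\sqrt{-11})$.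
   Context: $\mathbb{S}[\pm1]=\mathbb{S}[\mu_{2,+}]$ with $\mu_2=\{\pm1\}$; an $\mathbb{S}[\pm1]$-generator of a ring $A\supset\{\pm1\}$ is $X\in A$ such that each element of $A$ is uniquely a finite sum $\sum_j\alpha_jX^j$, $\alpha_j\in\{-1,0,1\}$. *)

theory Defs
  imports "HOL-Complex_Analysis.Complex_Analysis" "HOL-Computational_Algebra.Polynomial"
begin

definition zring :: "complex \<Rightarrow> complex set" where
  "zring x = {poly (map_poly of_int p) x | p :: int poly. True}"

definition qfield :: "complex \<Rightarrow> complex set" where
  "qfield x = {poly (map_poly of_rat p) x / poly (map_poly of_rat q) x
                 | p q :: rat poly. poly (map_poly of_rat q) x \<noteq> 0}"

definition spm1_generator :: "complex \<Rightarrow> bool" where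
  "spm1_generator x \<longleftrightarrow>
     (\<forall>z \<in> zring x. \<exists>!p :: int poly. (\<forall>j. coeff p j \<in> {-1, 0, 1}) \<and> poly (map_poly of_int p) x = z)"

definition imag_quadratic :: "complex \<Rightarrow> bool" where
  "imag_quadratic x \<longleftrightarrow> x \<notin> \<real> \<and>
     (\<exists>p :: rat poly. degree p = 2 \<and> poly (map_poly of_rat p) x = 0)"

end

theory Submission
  imports Defs
begin

text \<open>Write \<open>X\<^sup>2 = s X - n\<close>. A signed-digit expansion of 2 is a non-constant integer
  polynomial, so subtracting 2 gives an integer polynomial with unit leading coefficient vanishing
  at \<open>X\<close>; by Gauss's lemma \<open>s\<close> and \<open>n\<close> are integers, and \<open>n = |X|\<^sup>2 > 0\<close>.
  If \<open>d\<close> is the constant digit of 2, then \<open>2 - d \<in> {1, 2, 3}\<close> is \<open>X\<close> times an element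
  of \<open>\<int>[X]\<close>, hence divisible by the norm \<open>n\<close>; and \<open>n \<le> 2\<close> is impossible because then
  \<open>1 = (1 - n) + X (s - X)\<close> would be a second expansion of 1. So \<open>n = 3\<close>, the discriminant
  \<open>s\<^sup>2 - 12\<close> is negative, and the seven possible values of \<open>s\<close> give the three fields.

  Conversely, if \<open>X\<^sup>2 = s X - 3\<close> with \<open>|s| \<le> 2\<close>, expansions are unique because two
  digits whose difference is divisible by \<open>X\<close> differ by a multiple of 3, and they exist by
  descent on the norm: writing \<open>a = 3 j + d\<close> with a digit \<open>d\<close>, \<open>a + b X - d = X w\<close> where
  \<open>w\<close> has a third of the norm of \<open>a + b X - d\<close>, which is less than that of \<open>a + b X\<close>.\<close>

section \<open>Monic factors of integer polynomials\<close>

lemma map_poly_add_hom: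
  assumes "f 0 = 0" and "\<And>a b. f (a + b) = f a + f b"
  shows "map_poly f (p + q) = map_poly f p + map_poly f q"
  by (intro poly_eqI) (simp add: coeff_map_poly assms)

lemma map_poly_mult_hom:
  assumes zero: "f 0 = 0" and add: "\<And>a b. f (a + b) = f a + f b"
    and mult: "\<And>a b. f (a * b) = f a * f b"
  shows "map_poly f (p * q) = map_poly f p * map_poly f q"
proof (induction p rule: pCons_induct)
  case (pCons a p)
  have "map_poly f (pCons a p * q) = map_poly f (smult a q) + map_poly f (pCons 0 (p * q))"
    by (simp add: map_poly_add_hom zero add)
  also have "\<dots> = map_poly f (pCons a p) * map_poly f q"
    using pCons by (simp add: map_poly_smult map_poly_pCons zero mult)
  finally show ?case .
qed simp

lemma rat_poly_common_denominator:
  fixes g :: "rat poly"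
  obtains G :: "int poly" and D :: int where "D > 0" and "map_poly of_int G = smult (of_int D) g"
proof -
  have "\<exists>G D. D > 0 \<and> map_poly of_int G = smult (of_int D) g"
  proof (induction g rule: pCons_induct)
    case 0
    show ?case by (intro exI[of _ 0] exI[of _ 1]) simp
  next
    case (pCons c g)
    then obtain G D where "D > 0" and G: "map_poly of_int G = smult (of_int D) g" by blast
    obtain a b where ab: "quotient_of c = (a, b)" by fastforce
    have "c = of_int a / of_int b" and "b > 0"
      using quotient_of_div[OF ab] quotient_of_denom_pos[OF ab] by simp_all
    then have "map_poly of_int (pCons (a * D) (smult b G)) = smult (of_int (D * b)) (pCons c g)"
      using G by (simp add: map_poly_pCons map_poly_smult mult_ac)
    then show ?case
      using \<open>D > 0\<close> \<open>b > 0\<close> by (intro exI[of _ "pCons (a * D) (smult b G)"] exI[of _ "D * b"]) simp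
  qed
  then show ?thesis using that by blast
qed

lemma of_int_lead_coeff:
  "(of_int (lead_coeff p) :: 'a :: {ring_char_0}) = lead_coeff (map_poly of_int p)"
  by (simp add: degree_map_poly coeff_map_poly)

lemma map_poly_of_int_eq_iff:
  "map_poly (of_int :: int \<Rightarrow> 'a :: ring_char_0) p = map_poly of_int q \<longleftrightarrow> p = q"
  by (simp add: poly_eq_iff coeff_map_poly)

lemma content_eq_1_if_unit_lead_coeff:
  fixes f :: "int poly"
  assumes "is_unit (lead_coeff f)"
  shows "content f = 1"
  by (metis is_unit_normalize normalize_content dvd_unit_imp_unit[OF content_dvd_coeff assms])

lemma content_nonneg:
  fixes f :: "int poly"
  shows "content f \<ge> 0"
proof -
  have "content f = \<bar>content f\<bar>" using normalize_content[of f] by simp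
  then show ?thesis by (metis abs_ge_zero)
qed

lemma le_le_mult_eq_imp_eq:
  fixes a b c d :: "'a :: linordered_idom"
  assumes "a \<le> c" and "b \<le> d" and "a * b = c * d" and "0 \<le> a" and "0 < d"
  shows "a = c"
proof -
  have "c * d \<le> a * d" using assms(2-4) by (metis mult_left_mono)
  with assms(1,5) show ?thesis by simp
qed

lemma monic_factor_of_int_poly_integral:
  fixes f :: "int poly" and g h :: "rat poly"
  assumes fgh: "map_poly of_int f = g * h" and g_monic: "lead_coeff g = 1"
    and f_unit: "is_unit (lead_coeff f)"
  shows "coeff g i \<in> \<int>"
proof -
  obtain G D where "D > 0" and G: "map_poly of_int G = smult (of_int D) g"
    by (rule rat_poly_common_denominator)
  obtain H E where "E > 0" and H: "map_poly of_int H = smult (of_int E) h"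
    by (rule rat_poly_common_denominator)
  have "map_poly of_int (G * H) = (map_poly of_int (smult (D * E) f) :: rat poly)"
    by (simp add: map_poly_mult_hom G H fgh map_poly_smult mult_ac)
  then have GH: "G * H = smult (D * E) f"
    by (simp only: map_poly_of_int_eq_iff)
  have "of_int (lead_coeff G) = (of_int D :: rat)"
    by (simp add: of_int_lead_coeff G g_monic)
  then have lead_G: "lead_coeff G = D" by simp
  have "D * lead_coeff H = D * (E * lead_coeff f)"
    using arg_cong[OF GH, of lead_coeff] \<open>D > 0\<close> \<open>E > 0\<close> by (simp add: lead_coeff_mult lead_G)
  then have lead_H: "lead_coeff H = E * lead_coeff f" using \<open>D > 0\<close> by simp
  have "content G dvd D" "content H dvd E * lead_coeff f"
    using content_dvd_coeff[of G] content_dvd_coeff[of H] lead_G lead_H by metis+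
  then have "content G \<le> D" "content H \<le> E"
    using \<open>D > 0\<close> \<open>E > 0\<close> f_unit by (auto intro: zdvd_imp_le simp: dvd_mult_unit_iff)
  moreover have "content G * content H = D * E"
    using arg_cong[OF GH, of content] \<open>D > 0\<close> \<open>E > 0\<close>
    by (simp add: content_mult content_eq_1_if_unit_lead_coeff[OF f_unit])
  ultimately have "content G = D"
    using content_nonneg[of G] \<open>E > 0\<close> by (rule le_le_mult_eq_imp_eq)
  then obtain k where "coeff G i = D * k" using content_dvd_coeff[of G i] by (auto elim: dvdE)
  moreover have "of_int (coeff G i) = of_int D * coeff g i"
    using arg_cong[OF G, of "\<lambda>p. coeff p i"] by (simp add: coeff_map_poly)
  ultimately have "coeff g i = of_int k" using \<open>D > 0\<close> by simp
  then show ?thesis by simp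
qed

section \<open>Non-real quadratic numbers\<close>

lemma of_rat_complex: "(of_rat r :: complex) = of_real (of_rat r)"
  by (cases r) (simp add: of_rat_rat)

lemma poly_map_poly_of_rat_of_int:
  "poly (map_poly (of_rat :: rat \<Rightarrow> 'a :: field_char_0) (map_poly of_int f)) z
     = poly (map_poly of_int f) z"
  by (simp add: map_poly_map_poly o_def)

lemma nonreal_root_degree_ge_2:
  fixes r :: "rat poly" and X :: complex
  assumes "X \<notin> \<real>" and "poly (map_poly of_rat r) X = 0" and "r \<noteq> 0"
  shows "degree r \<ge> 2"
proof (rule ccontr)
  assume "\<not> degree r \<ge> 2"
  then have r: "r = [:coeff r 0, coeff r 1:]"
    by (auto simp: poly_eq_iff coeff_pCons coeff_eq_0 split: nat.splits)
  have "Im X \<noteq> 0" using assms(1) complex_is_Real_iff by blast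
  have "of_rat (coeff r 0) + X * of_rat (coeff r 1) = (0 :: complex)"
    using assms(2) by (subst (asm) r) (simp add: map_poly_pCons)
  from arg_cong[OF this, of Im] arg_cong[OF this, of Re] \<open>Im X \<noteq> 0\<close>
  have "coeff r 0 = 0" "coeff r 1 = 0" by (simp_all add: of_rat_complex)
  with r assms(3) show False by simp
qed

lemma nonreal_quadratic_coeffs_Ints:
  fixes X :: complex and \<sigma> \<nu> :: rat and f :: "int poly"
  assumes X: "X \<notin> \<real>" and X_sq: "X^2 = of_rat \<sigma> * X - of_rat \<nu>"
    and f_root: "poly (map_poly of_int f) X = 0" and f_unit: "is_unit (lead_coeff f)"
  shows "\<sigma> \<in> \<int>" and "\<nu> \<in> \<int>"
proof -
  define g :: "rat poly" where "g = [:\<nu>, -\<sigma>, 1:]"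
  define F :: "rat poly" where "F = map_poly of_int f"
  let ?ev = "\<lambda>p :: rat poly. poly (map_poly (of_rat :: rat \<Rightarrow> complex) p) X"
  have hom: "?ev (p * q) = ?ev p * ?ev q" "?ev (p + q) = ?ev p + ?ev q" for p q
    by (simp_all add: map_poly_mult_hom map_poly_add_hom of_rat_add of_rat_mult)
  have F_div_mod: "F = g * (F div g) + F mod g" by simp
  have "?ev g = 0"
    using X_sq by (simp add: g_def map_poly_pCons of_rat_minus power2_eq_square algebra_simps)
  moreover have "?ev F = 0"
    using f_root by (simp add: F_def poly_map_poly_of_rat_of_int)
  moreover have "?ev F = ?ev g * ?ev (F div g) + ?ev (F mod g)"
    by (subst F_div_mod) (simp only: hom)
  ultimately have "?ev (F mod g) = 0" by simp
  moreover have "g \<noteq> 0" "degree g = 2" by (simp_all add: g_def)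
  ultimately have "F mod g = 0"
    using nonreal_root_degree_ge_2[OF X] degree_mod_less'[of g F] by fastforce
  with F_div_mod have F_factor: "F = g * (F div g)" by simp
  have "lead_coeff g = 1" by (simp add: g_def)
  from monic_factor_of_int_poly_integral[OF F_factor[unfolded F_def] this f_unit]
  have "coeff g 0 \<in> \<int>" "coeff g 1 \<in> \<int>" by blast+
  then show "\<sigma> \<in> \<int>" "\<nu> \<in> \<int>" by (simp_all add: g_def minus_in_Ints_iff)
qed

lemma nonreal_quadratic_Re_Im:
  fixes X :: complex and s n :: int
  assumes X: "X \<notin> \<real>" and X_sq: "X^2 = of_int s * X - of_int n"
  shows "of_int s = 2 * Re X" and "of_int n = Re X ^ 2 + Im X ^ 2"
proof -
  have "Im X \<noteq> 0" using X complex_is_Real_iff by blast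
  have Re: "Re X ^ 2 - Im X ^ 2 = of_int s * Re X - of_int n"
    and Im: "2 * Re X * Im X = of_int s * Im X"
    using arg_cong[OF X_sq, of Re] arg_cong[OF X_sq, of Im] by (simp_all add: Re_power2 Im_power2)
  from Im \<open>Im X \<noteq> 0\<close> show s: "of_int s = 2 * Re X" by simp
  from Re s show "of_int n = Re X ^ 2 + Im X ^ 2" by (simp add: power2_eq_square)
qed

definition qspan :: "complex \<Rightarrow> complex set" where
  "qspan X = {of_rat a + of_rat b * X | a b. True}"

lemma poly_of_rat_in_qspan:
  fixes X :: complex
  assumes X_sq: "X^2 = of_rat \<sigma> * X - of_rat \<nu>"
  shows "poly (map_poly of_rat p) X \<in> qspan X"
proof (induction p rule: pCons_induct)
  case 0
  show ?case unfolding qspan_def by (intro CollectI exI[of _ 0]) simp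
next
  case (pCons c p)
  then obtain a b where "poly (map_poly of_rat p) X = of_rat a + of_rat b * X"
    unfolding qspan_def by blast
  then have "poly (map_poly of_rat (pCons c p)) X = of_rat c + of_rat a * X + of_rat b * X^2"
    by (simp add: map_poly_pCons algebra_simps power2_eq_square)
  also have "\<dots> = of_rat (c - b * \<nu>) + of_rat (a + b * \<sigma>) * X"
    by (simp add: X_sq algebra_simps of_rat_add of_rat_mult of_rat_diff)
  finally show ?case unfolding qspan_def by blast
qed

lemma qspan_mult:
  fixes X :: complex
  assumes X_sq: "X^2 = of_rat \<sigma> * X - of_rat \<nu>" and "y \<in> qspan X" and "z \<in> qspan X"
  shows "y * z \<in> qspan X"
proof -
  obtain a b c d where "y = of_rat a + of_rat b * X" and "z = of_rat c + of_rat d * X"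
    using assms(2,3) unfolding qspan_def by blast
  then have "y * z = of_rat (a * c) + of_rat (a * d + b * c) * X + of_rat (b * d) * X^2"
    by (simp add: algebra_simps power2_eq_square of_rat_add of_rat_mult)
  also have "\<dots> = of_rat (a * c - b * d * \<nu>) + of_rat (a * d + b * c + b * d * \<sigma>) * X"
    by (simp add: X_sq algebra_simps of_rat_add of_rat_mult of_rat_diff)
  finally show ?thesis unfolding qspan_def by blast
qed

lemma qspan_inverse:
  fixes X :: complex
  assumes X: "X \<notin> \<real>" and X_sq: "X^2 = of_rat \<sigma> * X - of_rat \<nu>" and "z \<in> qspan X"
  shows "inverse z \<in> qspan X"
proof (cases "z = 0")
  case False
  obtain c d where z: "z = of_rat c + of_rat d * X" using assms(3) unfolding qspan_def by blast
  define z' where "z' = of_rat (c + d * \<sigma>) - of_rat d * X"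
  define N where "N = c^2 + c * d * \<sigma> + d^2 * \<nu>"
  have "z * z' = of_rat (c^2 + c * d * \<sigma>) + of_rat (d^2) * (of_rat \<sigma> * X - X^2)"
    by (simp add: z z'_def algebra_simps power2_eq_square of_rat_add of_rat_mult)
  also have "\<dots> = of_rat N" by (simp add: X_sq N_def of_rat_add of_rat_mult)
  finally have zz': "z * z' = of_rat N" .
  have "N \<noteq> 0"
  proof
    assume "N = 0"
    then have z': "of_rat (c + d * \<sigma>) = of_rat d * X" using zz' False by (simp add: z'_def)
    have "Im X \<noteq> 0" using X complex_is_Real_iff by blast
    with arg_cong[OF z', of Im] have "d = 0" by (simp add: of_rat_complex)
    with z' have "c = 0" by simp
    with False z \<open>d = 0\<close> show False by simp
  qed
  then have "inverse z = of_rat ((c + d * \<sigma>) / N) + of_rat (- d / N) * X"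
    using zz' False by (simp add: field_simps z'_def of_rat_divide of_rat_minus)
  then show ?thesis unfolding qspan_def by blast
qed (use assms(3) in simp)

lemma qfield_eq_qspan:
  fixes X :: complex
  assumes X: "X \<notin> \<real>" and X_sq: "X^2 = of_rat \<sigma> * X - of_rat \<nu>"
  shows "qfield X = qspan X"
proof
  show "qfield X \<subseteq> qspan X"
    unfolding qfield_def divide_inverse
    using poly_of_rat_in_qspan[OF X_sq] qspan_mult[OF X_sq] qspan_inverse[OF X X_sq] by blast
next
  show "qspan X \<subseteq> qfield X"
  proof
    fix z assume "z \<in> qspan X"
    then obtain a b where "z = of_rat a + of_rat b * X" unfolding qspan_def by blast
    then show "z \<in> qfield X"
      unfolding qfield_def
      by (intro CollectI exI[of _ "[:a, b:]"] exI[of _ 1]) (simp add: map_poly_pCons algebra_simps)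
  qed
qed

lemma qspan_affine:
  fixes X :: complex
  assumes "v \<noteq> 0"
  shows "qspan (of_rat u + of_rat v * X) = qspan X"
proof
  show "qspan (of_rat u + of_rat v * X) \<subseteq> qspan X"
  proof
    fix z assume "z \<in> qspan (of_rat u + of_rat v * X)"
    then obtain a b where "z = of_rat a + of_rat b * (of_rat u + of_rat v * X)"
      unfolding qspan_def by blast
    then have "z = of_rat (a + b * u) + of_rat (b * v) * X"
      by (simp add: algebra_simps of_rat_add of_rat_mult)
    then show "z \<in> qspan X" unfolding qspan_def by blast
  qed
  show "qspan X \<subseteq> qspan (of_rat u + of_rat v * X)"
  proof
    fix z assume "z \<in> qspan X"
    then obtain a b where "z = of_rat a + of_rat b * X" unfolding qspan_def by blast
    then have "z = of_rat (a - b * u / v) + of_rat (b / v) * (of_rat u + of_rat v * X)"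
      using assms by (simp add: algebra_simps of_rat_add of_rat_mult of_rat_diff of_rat_divide)
    then show "z \<in> qspan (of_rat u + of_rat v * X)" unfolding qspan_def by blast
  qed
qed

lemma imag_sqrt_squared:
  assumes "k \<ge> 0"
  shows "(\<i> * complex_of_real (sqrt k))^2 = - complex_of_real k"
  using assms by (simp add: power_mult_distrib flip: of_real_power)

lemma qfield_eq_qfield_imag_sqrt:
  fixes X :: complex and c k :: real
  assumes X: "X \<notin> \<real>" and X_sq: "X^2 = of_rat \<sigma> * X - of_rat \<nu>"
    and "Re X \<in> \<rat>" and Im_sq: "Im X ^ 2 = c^2 * k" and "c \<in> \<rat>" "c \<noteq> 0" and "k \<in> \<rat>" "k > 0"
  shows "qfield X = qfield (\<i> * of_real (sqrt k))"
proof -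
  obtain u v \<kappa> where u: "Re X = of_rat u" and v: "c = of_rat v" and \<kappa>: "k = of_rat \<kappa>"
    using assms(3,5,7) by (metis Rats_cases)
  have "Im X ^ 2 = (c * sqrt k)^2" using Im_sq \<open>k > 0\<close> by (simp add: power_mult_distrib)
  then have "Im X = c * sqrt k \<or> Im X = - (c * sqrt k)" by (simp add: power2_eq_iff)
  then obtain v' where v': "Im X = of_rat v' * sqrt k" "v' \<noteq> 0"
    using \<open>c \<noteq> 0\<close> v by (metis mult_minus_left of_rat_minus neg_equal_0_iff_equal of_rat_eq_0_iff)
  have "X = of_rat u + of_rat v' * (\<i> * of_real (sqrt k))"
    by (simp add: complex_eq_iff of_rat_complex u v')
  then have "qspan X = qspan (\<i> * of_real (sqrt k))" using qspan_affine[OF \<open>v' \<noteq> 0\<close>] by simp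
  moreover have "(\<i> * of_real (sqrt k))^2 = of_rat 0 * (\<i> * of_real (sqrt k)) - of_rat \<kappa>"
    using imag_sqrt_squared \<open>k > 0\<close> \<kappa> by (simp add: of_rat_complex)
  moreover have "\<i> * of_real (sqrt k) \<notin> \<real>" using \<open>k > 0\<close> by (simp add: complex_is_Real_iff)
  ultimately show ?thesis using qfield_eq_qspan[OF X X_sq] qfield_eq_qspan by metis
qed

section \<open>The ring \<open>\<int>[X]\<close> and signed-digit expansions\<close>

lemma poly_of_int_quadratic_linear:
  fixes X :: complex
  assumes X_sq: "X^2 = of_int s * X - of_int n"
  obtains a b where "poly (map_poly of_int p) X = of_int a + of_int b * X"
proof -
  have "\<exists>a b. poly (map_poly of_int p) X = of_int a + of_int b * X"
  proof (induction p rule: pCons_induct)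
    case (pCons c p)
    then obtain a b where "poly (map_poly of_int p) X = of_int a + of_int b * X" by blast
    then have "poly (map_poly of_int (pCons c p)) X = of_int c + of_int a * X + of_int b * X^2"
      by (simp add: map_poly_pCons algebra_simps power2_eq_square)
    also have "\<dots> = of_int (c - b * n) + of_int (a + b * s) * X"
      by (simp add: X_sq algebra_simps)
    finally show ?case by blast
  qed (intro exI[of _ 0]; simp)
  then show ?thesis using that by blast
qed

lemma zring_quadratic:
  fixes X :: complex
  assumes X_sq: "X^2 = of_int s * X - of_int n"
  shows "zring X = {of_int a + of_int b * X | a b. True}"
proof
  show "zring X \<subseteq> {of_int a + of_int b * X | a b. True}"
  proof
    fix z assume "z \<in> zring X"
    then obtain p where z: "z = poly (map_poly of_int p) X" unfolding zring_def by blast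
    obtain a b where "poly (map_poly of_int p) X = of_int a + of_int b * X"
      by (rule poly_of_int_quadratic_linear[OF X_sq])
    with z show "z \<in> {of_int a + of_int b * X | a b. True}" by blast
  qed
  show "{of_int a + of_int b * X | a b. True} \<subseteq> zring X"
  proof
    fix z assume "z \<in> {of_int a + of_int b * X | a b. True}"
    then obtain a b where "z = of_int a + of_int b * X" by blast
    then have "poly (map_poly of_int [:a, b:]) X = z" by (simp add: map_poly_pCons algebra_simps)
    then show "z \<in> zring X" unfolding zring_def by blast
  qed
qed

lemma norm_dvd_of_int_multiple:
  fixes X :: complex
  assumes X: "X \<notin> \<real>" and X_sq: "X^2 = of_int s * X - of_int n"
    and m: "of_int m = X * (of_int a + of_int b * X)"
  shows "n dvd m"
proof -
  have "X * (of_int a + of_int b * X) = of_int a * X + of_int b * X^2"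
    by (simp add: algebra_simps power2_eq_square)
  also have "\<dots> = of_int (- n * b) + of_int (a + b * s) * X"
    by (simp add: X_sq algebra_simps)
  finally have "X * (of_int a + of_int b * X) = of_int (- n * b) + of_int (a + b * s) * X" .
  with m have e: "of_int m = of_int (- n * b) + of_int (a + b * s) * X" by simp
  have "Im X \<noteq> 0" using X complex_is_Real_iff by blast
  with arg_cong[OF e, of Im] have "a + b * s = 0" by (simp del: of_int_add of_int_mult)
  with e have "of_int m = (of_int (- n * b) :: complex)" by simp
  then have "m = - n * b" by (simp only: of_int_eq_iff)
  then show ?thesis by simp
qed

lemma zring_1_plus:
  fixes X :: complex
  assumes X_sq: "X^2 = of_int s * X - of_int n"
  shows "zring (1 + X) = zring X"
proof -
  have X1_sq: "(1 + X)^2 = of_int (s + 2) * (1 + X) - of_int (s + n + 1)"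
  proof -
    have "(1 + X)^2 = 1 + 2 * X + X^2" by (simp add: power2_sum)
    also have "\<dots> = of_int (s + 2) * (1 + X) - of_int (s + n + 1)" by (simp add: X_sq algebra_simps)
    finally show ?thesis .
  qed
  show ?thesis
    unfolding zring_quadratic[OF X1_sq] zring_quadratic[OF X_sq]
  proof (intro equalityI subsetI)
    fix z assume "z \<in> {of_int a + of_int b * (1 + X) | a b. True}"
    then obtain a b where "z = of_int a + of_int b * (1 + X)" by blast
    then have "z = of_int (a + b) + of_int b * X" by (simp add: algebra_simps)
    then show "z \<in> {of_int a + of_int b * X | a b. True}" by blast
  next
    fix z assume "z \<in> {of_int a + of_int b * X | a b. True}"
    then obtain a b where "z = of_int a + of_int b * X" by blast
    then have "z = of_int (a - b) + of_int b * (1 + X)" by (simp add: algebra_simps)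
    then show "z \<in> {of_int a + of_int b * (1 + X) | a b. True}" by blast
  qed
qed

definition signed_digits :: "int poly \<Rightarrow> bool" where
  "signed_digits p \<longleftrightarrow> (\<forall>j. coeff p j \<in> {-1, 0, 1})"

lemma signed_digits_0 [simp]: "signed_digits 0"
  by (simp add: signed_digits_def)

lemma signed_digits_pCons_iff [simp]:
  "signed_digits (pCons a p) \<longleftrightarrow> a \<in> {-1, 0, 1} \<and> signed_digits p"
  unfolding signed_digits_def by (metis coeff_pCons_0 coeff_pCons_Suc not0_implies_Suc)

lemma spm1_generator_iff:
  "spm1_generator X \<longleftrightarrow>
     (\<forall>z \<in> zring X. \<exists>!p. signed_digits p \<and> poly (map_poly of_int p) X = z)"
  by (simp add: spm1_generator_def signed_digits_def)

lemma signed_digits_head_unique: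
  fixes X :: complex
  assumes X: "X \<notin> \<real>" and X_sq: "X^2 = of_int s * X - of_int n" and "n \<ge> 3"
    and "a \<in> {-1, 0, 1}" "b \<in> {-1, 0, 1}"
    and eq: "poly (map_poly of_int (pCons a p)) X = poly (map_poly of_int (pCons b q)) X"
  shows "a = b" and "poly (map_poly of_int p) X = poly (map_poly of_int q) X"
proof -
  obtain a1 b1 where p: "poly (map_poly of_int p) X = of_int a1 + of_int b1 * X"
    by (rule poly_of_int_quadratic_linear[OF X_sq])
  obtain a2 b2 where q: "poly (map_poly of_int q) X = of_int a2 + of_int b2 * X"
    by (rule poly_of_int_quadratic_linear[OF X_sq])
  from eq have "of_int (a - b) = X * (of_int (a2 - a1) + of_int (b2 - b1) * X)"
    by (simp add: map_poly_pCons p q algebra_simps)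
  then have "n dvd a - b" by (rule norm_dvd_of_int_multiple[OF X X_sq])
  moreover have "\<bar>a - b\<bar> < n" using \<open>n \<ge> 3\<close> assms(4,5) by auto
  ultimately show "a = b" using dvd_imp_le_int[of "a - b" n] by fastforce
  moreover have "X \<noteq> 0" using X by auto
  ultimately show "poly (map_poly of_int p) X = poly (map_poly of_int q) X"
    using eq by (simp add: map_poly_pCons)
qed

lemma signed_digits_unique:
  fixes X :: complex
  assumes X: "X \<notin> \<real>" and X_sq: "X^2 = of_int s * X - of_int n" and "n \<ge> 3"
    and "signed_digits p" "signed_digits q"
    and "poly (map_poly of_int p) X = poly (map_poly of_int q) X"
  shows "p = q"
proof -
  have "coeff p j = coeff q j" for j
    using assms(4-6)
  proof (induction j arbitrary: p q)
    case 0
    obtain a p' b q' where pq: "p = pCons a p'" "q = pCons b q'" by (meson pCons_cases)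
    with 0 have "a = b"
      using signed_digits_head_unique(1)[OF X X_sq \<open>n \<ge> 3\<close>, of a b p' q'] by simp
    with pq show ?case by simp
  next
    case (Suc j)
    obtain a p' b q' where pq: "p = pCons a p'" "q = pCons b q'" by (meson pCons_cases)
    with Suc.prems have "signed_digits p'" "signed_digits q'"
      and "poly (map_poly of_int p') X = poly (map_poly of_int q') X"
      using signed_digits_head_unique(2)[OF X X_sq \<open>n \<ge> 3\<close>, of a b p' q'] by simp_all
    then have "coeff p' j = coeff q' j" by (rule Suc.IH)
    with pq show ?case by simp
  qed
  then show ?thesis by (simp add: poly_eq_iff)
qed

text \<open>The norm \<open>(a + b X) (a + b (cnj X))\<close> of \<open>a + b X\<close> when \<open>X\<^sup>2 = s X - 3\<close>.\<close>
definition norm_form :: "int \<Rightarrow> int \<Rightarrow> int \<Rightarrow> int" where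
  "norm_form s a b = a^2 + a * b * s + 3 * b^2"

lemma norm_form_lower_bound:
  assumes "\<bar>s\<bar> \<le> 2"
  shows "(2 * a + b * s)^2 \<le> 4 * norm_form s a b" and "8 * b^2 \<le> 4 * norm_form s a b"
proof -
  have identity: "4 * norm_form s a b = (2 * a + b * s)^2 + (12 - s^2) * b^2"
    by (simp add: norm_form_def power2_eq_square algebra_simps)
  have "s^2 \<le> 4" using assms abs_le_square_iff[of s 2] by simp
  then have "8 * b^2 \<le> (12 - s^2) * b^2" by (intro mult_right_mono) simp_all
  moreover have "0 \<le> (2 * a + b * s)^2" "0 \<le> b^2" by simp_all
  ultimately show "(2 * a + b * s)^2 \<le> 4 * norm_form s a b" and "8 * b^2 \<le> 4 * norm_form s a b"
    unfolding identity by linarith+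
qed

lemma norm_form_descent:
  assumes "\<bar>s\<bar> \<le> 2" and "d \<in> {-1, 0, 1}" and "norm_form s a b \<ge> 2"
  shows "norm_form s (a - d) b < 3 * norm_form s a b"
proof -
  define N t where "N = norm_form s a b" and "t = 2 * a + b * s"
  have "(2 * N - 1)^2 = 4 * N + (4 * N * (N - 2) + 1)" by (simp add: power2_eq_square algebra_simps)
  moreover have "0 \<le> 4 * N * (N - 2)" using assms(3) by (simp add: N_def)
  moreover have "\<bar>t\<bar>^2 \<le> 4 * N" using norm_form_lower_bound(1)[OF assms(1)] by (simp add: N_def t_def)
  ultimately have "\<bar>t\<bar>^2 < (2 * N - 1)^2" by linarith
  then have "\<bar>t\<bar> + 1 < 2 * N"
    using assms(3) power_less_imp_less_base[of "\<bar>t\<bar>" 2 "2 * N - 1"] by (simp add: N_def)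
  moreover have "norm_form s (a - d) b = N - d * t + d^2"
    by (simp add: N_def t_def norm_form_def power2_eq_square algebra_simps)
  moreover have "d^2 - d * t \<le> \<bar>t\<bar> + 1" using assms(2) by auto
  ultimately show ?thesis unfolding N_def by linarith
qed

lemma signed_digits_exist:
  fixes X :: complex
  assumes X_sq: "X^2 = of_int s * X - 3" and s: "\<bar>s\<bar> \<le> 2"
  shows "\<exists>p. signed_digits p \<and> poly (map_poly of_int p) X = of_int a + of_int b * X"
proof (induction "nat (norm_form s a b)" arbitrary: a b rule: less_induct)
  case less
  show ?case
  proof (cases "norm_form s a b \<le> 1")
    case True
    then have "8 * b^2 \<le> 4" using norm_form_lower_bound(2)[OF s, where a = a and b = b] by linarith
    then have "b^2 < 1" by linarith
    then have "b = 0" by (simp add: abs_square_less_1)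
    with True have "a^2 \<le> 1" by (simp add: norm_form_def)
    then have "a \<in> {-1, 0, 1}" unfolding abs_square_le_1 by auto
    with \<open>b = 0\<close> show ?thesis by (intro exI[of _ "[:a:]"]) (simp add: map_poly_pCons)
  next
    case False
    define d j where "d = (a + 1) mod 3 - 1" and "j = (a + 1) div 3"
    have a: "a = 3 * j + d" unfolding d_def j_def using div_mult_mod_eq[of "a + 1" 3] by linarith
    have d: "d \<in> {-1, 0, 1}" unfolding d_def by auto
    define a' b' where "a' = j * s + b" and "b' = - j"
    have "3 * norm_form s a' b' = norm_form s (a - d) b"
      by (simp add: norm_form_def a a'_def b'_def power2_eq_square algebra_simps)
    moreover have "0 \<le> norm_form s a' b'"
      using norm_form_lower_bound(2)[OF s, where a = a' and b = b'] zero_le_power2[of b'] by linarith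
    ultimately have "nat (norm_form s a' b') < nat (norm_form s a b)"
      using norm_form_descent[OF s d, where a = a and b = b] False by linarith
    then obtain p where "signed_digits p" and p: "poly (map_poly of_int p) X = of_int a' + of_int b' * X"
      using less by blast
    have "of_int d + X * (of_int a' + of_int b' * X) = of_int d + of_int a' * X - of_int j * X^2"
      by (simp add: a'_def b'_def algebra_simps power2_eq_square)
    also have "\<dots> = of_int a + of_int b * X"
      by (simp add: X_sq a a'_def algebra_simps)
    finally have "of_int d + X * (of_int a' + of_int b' * X) = of_int a + of_int b * X" .
    with \<open>signed_digits p\<close> d p show ?thesis
      by (intro exI[of _ "pCons d p"]) (simp add: map_poly_pCons)
  qed
qed

lemma spm1_generator_if_norm_3:
  fixes X :: complex
  assumes X: "X \<notin> \<real>" and X_sq: "X^2 = of_int s * X - 3" and "\<bar>s\<bar> \<le> 2"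
  shows "spm1_generator X"
proof -
  have X_sq': "X^2 = of_int s * X - of_int 3" using X_sq by simp
  show ?thesis
    unfolding spm1_generator_iff zring_quadratic[OF X_sq']
    using signed_digits_exist[OF X_sq \<open>\<bar>s\<bar> \<le> 2\<close>] signed_digits_unique[OF X X_sq'] by fastforce
qed

section \<open>Classification of the fields\<close>

lemma imag_quadratic_rat_eq:
  fixes X :: complex
  assumes "imag_quadratic X"
  obtains \<sigma> \<nu> :: rat where "X^2 = of_rat \<sigma> * X - of_rat \<nu>"
proof -
  obtain P :: "rat poly" where "degree P = 2" and P_root: "poly (map_poly of_rat P) X = 0"
    using assms unfolding imag_quadratic_def by blast
  define c0 c1 c2 where "c0 = coeff P 0" and "c1 = coeff P 1" and "c2 = coeff P 2"
  have "P \<noteq> 0" using \<open>degree P = 2\<close> by auto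
  then have "c2 \<noteq> 0" using \<open>degree P = 2\<close> leading_coeff_0_iff[of P] by (simp add: c2_def)
  have "P = [:c0, c1, c2:]"
    using \<open>degree P = 2\<close>
    by (auto simp: poly_eq_iff coeff_pCons coeff_eq_0 c0_def c1_def c2_def numeral_2_eq_2 split: nat.splits)
  with P_root have "of_rat c0 + X * (of_rat c1 + X * of_rat c2) = 0"
    by (simp add: map_poly_pCons)
  then have "of_rat c2 * X^2 = of_rat c2 * X^2 - (of_rat c0 + X * (of_rat c1 + X * of_rat c2))"
    by simp
  also have "\<dots> = - of_rat c1 * X - of_rat c0" by (simp add: algebra_simps power2_eq_square)
  finally have "of_rat c2 * X^2 = - of_rat c1 * X - of_rat c0" .
  with \<open>c2 \<noteq> 0\<close> have "X^2 = of_rat (- c1 / c2) * X - of_rat (c0 / c2)"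
    by (simp add: field_simps of_rat_divide of_rat_minus)
  then show ?thesis by (rule that)
qed

lemma spm1_generator_unit_lead_root:
  fixes X :: complex
  assumes "spm1_generator X"
  obtains f :: "int poly" where "poly (map_poly of_int f) X = 0" and "is_unit (lead_coeff f)"
proof -
  have "2 \<in> zring X"
    unfolding zring_def by (intro CollectI exI[of _ "[:2:]"]) (simp add: map_poly_pCons)
  then obtain p where p: "signed_digits p" "poly (map_poly of_int p) X = 2"
    using assms unfolding spm1_generator_iff by blast
  have "degree p \<noteq> 0"
  proof
    assume "degree p = 0"
    then obtain c where "p = [:c:]" by (rule degree_eq_zeroE)
    with p have "c \<in> {-1, 0, 1}" and "of_int c = (2 :: complex)" by (simp_all add: map_poly_pCons)
    then show False by auto
  qed
  have "lead_coeff ([:-2:] + p) = lead_coeff p"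
    using \<open>degree p \<noteq> 0\<close> lead_coeff_add_le[of "[:-2:]" p] by simp
  moreover have "lead_coeff p \<in> {-1, 1}"
    using p(1) \<open>degree p \<noteq> 0\<close> unfolding signed_digits_def by (metis insert_iff leading_coeff_0_iff degree_0)
  moreover have "poly (map_poly of_int ([:-2:] + p)) X = 0"
    by (simp add: map_poly_add_hom map_poly_pCons p(2))
  ultimately show ?thesis using that[of "[:-2:] + p"] by auto
qed

lemma spm1_generator_norm_le_3:
  fixes X :: complex
  assumes X: "X \<notin> \<real>" and X_sq: "X^2 = of_int s * X - of_int n" and "n > 0"
    and gen: "spm1_generator X"
  shows "n \<le> 3"
proof -
  have "2 \<in> zring X"
    unfolding zring_def by (intro CollectI exI[of _ "[:2:]"]) (simp add: map_poly_pCons)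
  then obtain p where p: "signed_digits p" "poly (map_poly of_int p) X = 2"
    using gen unfolding spm1_generator_iff by blast
  obtain d p' where "p = pCons d p'" by (rule pCons_cases)
  with p have d: "d \<in> {-1, 0, 1}" and "of_int d + X * poly (map_poly of_int p') X = 2"
    by (simp_all add: map_poly_pCons)
  moreover obtain a b where "poly (map_poly of_int p') X = of_int a + of_int b * X"
    by (rule poly_of_int_quadratic_linear[OF X_sq])
  ultimately have "of_int (2 - d) = X * (of_int a + of_int b * X)"
    by (metis add_diff_cancel_left' of_int_diff of_int_numeral)
  then have "n dvd 2 - d" by (rule norm_dvd_of_int_multiple[OF X X_sq])
  with d show "n \<le> 3" by (auto dest: zdvd_imp_le)
qed

lemma spm1_generator_norm_ge_3:
  fixes X :: complex
  assumes X_sq: "X^2 = of_int s * X - of_int n" and "n > 0" and gen: "spm1_generator X"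
  shows "n \<ge> 3"
proof (rule ccontr)
  assume "\<not> n \<ge> 3"
  with \<open>n > 0\<close> have n: "1 - n \<in> {-1, 0, 1}" by auto
  have unique: "\<exists>!p. signed_digits p \<and> poly (map_poly of_int p) X = z" if "z \<in> zring X" for z
    using gen that unfolding spm1_generator_iff by blast
  have "of_int s - X \<in> zring X"
    unfolding zring_quadratic[OF X_sq] by (intro CollectI exI[of _ s] exI[of _ "-1"]) simp
  have "1 \<in> zring X"
    unfolding zring_quadratic[OF X_sq] by (intro CollectI exI[of _ 1] exI[of _ 0]) simp
  obtain w where w: "signed_digits w" "poly (map_poly of_int w) X = of_int s - X"
    using unique[OF \<open>of_int s - X \<in> zring X\<close>] by blast
  have "poly (map_poly of_int (pCons (1 - n) w)) X = of_int (1 - n) + X * (of_int s - X)"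
    by (simp add: map_poly_pCons w(2))
  also have "\<dots> = 1" by (simp add: algebra_simps power2_eq_square[symmetric] X_sq)
  finally have "poly (map_poly of_int (pCons (1 - n) w)) X = 1" .
  moreover have "signed_digits (pCons (1 - n) w)" using w(1) n by simp
  moreover have "signed_digits [:1:]" "poly (map_poly of_int [:1:]) X = (1 :: complex)"
    by (simp_all add: map_poly_pCons)
  ultimately have "pCons (1 - n) w = [:1:]" using unique[OF \<open>1 \<in> zring X\<close>] by blast
  with \<open>n > 0\<close> show False by simp
qed

lemma twelve_minus_square_cases:
  fixes s :: int
  assumes "s^2 < 12"
  obtains c k where "12 - s^2 = c^2 * k" and "c \<noteq> 0" and "k \<in> {2, 3, 11}"
proof -
  have "\<not> 4 \<le> \<bar>s\<bar>" using abs_le_square_iff[of 4 s] assms by simp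
  then have "s \<in> {-3, -2, -1, 0, 1, 2, 3}" by auto
  then have "s^2 \<in> {0, 1, 4, 9}" by auto
  then show ?thesis
  proof (elim insertE emptyE)
    assume "s^2 = 0" then show ?thesis by (intro that[of 2 3]) simp_all
  next
    assume "s^2 = 1" then show ?thesis by (intro that[of 1 11]) simp_all
  next
    assume "s^2 = 4" then show ?thesis by (intro that[of 2 2]) simp_all
  next
    assume "s^2 = 9" then show ?thesis by (intro that[of 1 3]) simp_all
  qed
qed

lemma qfield_of_norm_3:
  fixes X :: complex
  assumes X: "X \<notin> \<real>" and X_sq: "X^2 = of_int s * X - 3"
  shows "qfield X = qfield (\<i> * of_real (sqrt 2)) \<or> qfield X = qfield (\<i> * of_real (sqrt 3))
           \<or> qfield X = qfield (\<i> * of_real (sqrt 11))"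
proof -
  have X_sq_int: "X^2 = of_int s * X - of_int 3" and X_sq_rat: "X^2 = of_rat (of_int s) * X - of_rat 3"
    using X_sq by simp_all
  have s: "of_int s = 2 * Re X" and n: "3 = Re X ^ 2 + Im X ^ 2"
    using nonreal_quadratic_Re_Im[OF X X_sq_int] by simp_all
  from s have Re: "Re X = of_int s / 2" by simp
  from n have "Im X ^ 2 = 3 - Re X ^ 2" by simp
  also have "\<dots> = of_int (12 - s^2) / 4" unfolding Re by (simp add: power_divide field_simps)
  finally have Im: "Im X ^ 2 = of_int (12 - s^2) / 4" .
  have "Im X \<noteq> 0" using X complex_is_Real_iff by blast
  then have "Im X ^ 2 > 0" by simp
  then have "0 < real_of_int (12 - s^2) / 4" unfolding Im .
  then have "s^2 < 12" by (simp del: of_int_diff of_int_power)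
  then obtain c k :: int where ck: "12 - s^2 = c^2 * k" "c \<noteq> 0" "k \<in> {2, 3, 11}"
    by (rule twelve_minus_square_cases)
  have "qfield X = qfield (\<i> * of_real (sqrt (of_int k)))"
  proof (rule qfield_eq_qfield_imag_sqrt[OF X X_sq_rat])
    show "Im X ^ 2 = (of_int c / 2)^2 * of_int k"
      unfolding Im ck(1) by (simp add: power_divide)
    show "Re X \<in> \<rat>" unfolding Re by simp
    show "of_int k > (0 :: real)" using ck(3) by auto
  qed (use ck(2) in simp_all)
  with ck(3) show ?thesis by (elim insertE emptyE) simp_all
qed

lemma qfield_of_spm1_generator:
  fixes X :: complex
  assumes iq: "imag_quadratic X" and gen: "spm1_generator X"
  shows "qfield X = qfield (\<i> * of_real (sqrt 2)) \<or> qfield X = qfield (\<i> * of_real (sqrt 3))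
           \<or> qfield X = qfield (\<i> * of_real (sqrt 11))"
proof -
  have X: "X \<notin> \<real>" using iq unfolding imag_quadratic_def by blast
  obtain \<sigma> \<nu> where X_sq: "X^2 = of_rat \<sigma> * X - of_rat \<nu>" by (rule imag_quadratic_rat_eq[OF iq])
  obtain f where "poly (map_poly of_int f) X = 0" "is_unit (lead_coeff f)"
    by (rule spm1_generator_unit_lead_root[OF gen])
  from nonreal_quadratic_coeffs_Ints[OF X X_sq this] obtain s n where "\<sigma> = of_int s" "\<nu> = of_int n"
    by (auto elim!: Ints_cases)
  with X_sq have X_sq_int: "X^2 = of_int s * X - of_int n" by simp
  have "Im X \<noteq> 0" using X complex_is_Real_iff by blast
  then have "real_of_int n > 0"
    using nonreal_quadratic_Re_Im(2)[OF X X_sq_int] by (simp add: add_nonneg_pos)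
  then have "n > 0" by simp
  then have "n = 3"
    using spm1_generator_norm_le_3[OF X X_sq_int] spm1_generator_norm_ge_3[OF X_sq_int] gen by force
  with X_sq_int have "X^2 = of_int s * X - 3" by simp
  then show ?thesis by (rule qfield_of_norm_3[OF X])
qed

section \<open>Rings of integers\<close>

lemma algebraic_int_zring:
  fixes X :: complex
  assumes X_sq: "X^2 = of_int s * X - of_int n" and "z \<in> zring X"
  shows "algebraic_int z"
proof -
  obtain a b where z: "z = of_int a + of_int b * X"
    using assms(2) unfolding zring_quadratic[OF X_sq] by blast
  define f where "f = [:a^2 + a * b * s + n * b^2, - (2 * a + b * s), 1:]"
  have "poly (map_poly of_int f) z = of_int b ^ 2 * (X^2 - of_int s * X + of_int n)"
    by (simp add: f_def z map_poly_pCons power2_eq_square algebra_simps)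
  also have "\<dots> = 0" by (simp add: X_sq)
  finally show ?thesis unfolding algebraic_int_altdef_ipoly by (intro exI[of _ f]) (simp add: f_def)
qed

lemma algebraic_int_of_rat_Ints:
  fixes u :: rat
  assumes "algebraic_int (of_rat u :: complex)"
  shows "u \<in> \<int>"
proof -
  from assms have "of_rat u \<in> (\<int> :: complex set)"
    by (intro rational_algebraic_int_is_int) simp_all
  then obtain m where "(of_rat u :: complex) = of_int m" by (auto elim: Ints_cases)
  then have "u = of_int m" by (metis of_rat_eq_iff of_rat_of_int_eq)
  then show ?thesis by simp
qed

lemma algebraic_int_trace_norm_Ints:
  fixes X :: complex and u v :: rat
  assumes X: "X \<notin> \<real>" and X_sq: "X^2 = of_int s * X - of_int n"
    and alg: "algebraic_int (of_rat u + of_rat v * X)"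
  shows "2 * u + v * of_int s \<in> \<int> \<and> u^2 + u * v * of_int s + of_int n * v^2 \<in> \<int>"
proof (cases "v = 0")
  case True
  with alg have "u \<in> \<int>" by (intro algebraic_int_of_rat_Ints) simp
  with True show ?thesis by simp
next
  case False
  define z where "z = of_rat u + of_rat v * X"
  have "Im X \<noteq> 0" using X complex_is_Real_iff by blast
  with False have "z \<notin> \<real>" by (simp add: z_def complex_is_Real_iff of_rat_complex)
  have "z^2 - (2 * of_rat u + of_rat v * of_int s) * z
          + (of_rat u ^ 2 + of_rat u * of_rat v * of_int s + of_int n * of_rat v ^ 2)
        = of_rat v ^ 2 * (X^2 - of_int s * X + of_int n)"
    by (simp add: z_def power2_eq_square algebra_simps)
  also have "\<dots> = 0" by (simp add: X_sq)
  finally have "z^2 = (2 * of_rat u + of_rat v * of_int s) * z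
                  - (of_rat u ^ 2 + of_rat u * of_rat v * of_int s + of_int n * of_rat v ^ 2)"
    by (simp only: diff_add_eq eq_iff_diff_eq_0[symmetric] eq_diff_eq)
  then have z_sq: "z^2 = of_rat (2 * u + v * of_int s) * z - of_rat (u^2 + u * v * of_int s + of_int n * v^2)"
    by (simp add: of_rat_add of_rat_mult of_rat_power)
  obtain f where f: "poly (map_poly of_int f) z = 0" and "lead_coeff f = 1"
    using alg unfolding z_def[symmetric] algebraic_int_altdef_ipoly by blast
  then have "is_unit (lead_coeff f)" by simp
  with nonreal_quadratic_coeffs_Ints[OF \<open>z \<notin> \<real>\<close> z_sq f] show ?thesis by blast
qed

lemma zring_eq_algebraic_ints:
  fixes X :: complex
  assumes X: "X \<notin> \<real>" and X_sq: "X^2 = of_int s * X - of_int n"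
    and integral: "\<And>u v :: rat. 2 * u + v * of_int s \<in> \<int> \<Longrightarrow>
                    u^2 + u * v * of_int s + of_int n * v^2 \<in> \<int> \<Longrightarrow> u \<in> \<int> \<and> v \<in> \<int>"
  shows "zring X = {z \<in> qfield X. algebraic_int z}"
proof -
  have "qfield X = qspan X"
    by (rule qfield_eq_qspan[OF X, of "of_int s" "of_int n"]) (simp add: X_sq)
  then have qfield: "qfield X = {of_rat u + of_rat v * X | u v. True}" by (simp add: qspan_def)
  show ?thesis
  proof (intro equalityI subsetI CollectI conjI)
    fix z assume "z \<in> zring X"
    then show "algebraic_int z" by (rule algebraic_int_zring[OF X_sq])
    from \<open>z \<in> zring X\<close> obtain a b where "z = of_int a + of_int b * X"
      unfolding zring_quadratic[OF X_sq] by blast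
    then have "z = of_rat (of_int a) + of_rat (of_int b) * X" by simp
    then show "z \<in> qfield X" unfolding qfield by blast
  next
    fix z assume "z \<in> {z \<in> qfield X. algebraic_int z}"
    then obtain u v where z: "z = of_rat u + of_rat v * X" and "algebraic_int z"
      unfolding qfield by blast
    then have "u \<in> \<int>" "v \<in> \<int>"
      using integral algebraic_int_trace_norm_Ints[OF X X_sq] z by blast+
    then obtain a b where "u = of_int a" "v = of_int b" by (auto elim!: Ints_cases)
    with z show "z \<in> zring X" unfolding zring_quadratic[OF X_sq] by auto
  qed
qed

lemma rat_Ints_of_square_Ints:
  fixes x :: rat
  assumes "x^2 \<in> \<int>"
  shows "x \<in> \<int>"
proof -
  have "algebraic_int x"
    by (rule algebraic_int_root[OF int_imp_algebraic_int[OF assms], of "monom 1 2"])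
      (simp_all add: poly_monom degree_monom_eq coeff_monom)
  moreover have "x \<in> \<rat>" by (metis Rats_of_rat id_apply of_rat_eq_id)
  ultimately show ?thesis by (rule rational_algebraic_int_is_int)
qed

lemma Ints_of_trace_norm_sqrt_neg_2:
  fixes u v :: rat
  assumes "2 * u \<in> \<int>" and "u^2 + 2 * v^2 \<in> \<int>"
  shows "u \<in> \<int> \<and> v \<in> \<int>"
proof -
  obtain A M where A: "2 * u = of_int A" and M: "u^2 + 2 * v^2 = of_int M"
    using assms by (auto elim!: Ints_cases)
  have "(4 * v)^2 = 8 * (u^2 + 2 * v^2) - 2 * (2 * u)^2" by (simp add: power2_eq_square algebra_simps)
  then have sq: "(4 * v)^2 = of_int (2 * (4 * M - A^2))" using A M by simp
  have "(4 * v)^2 \<in> \<int>" unfolding sq by (rule Ints_of_int)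
  then have "4 * v \<in> \<int>" by (rule rat_Ints_of_square_Ints)
  then obtain w where w: "4 * v = of_int w" by (auto elim: Ints_cases)
  with sq have "of_int (w^2) = (of_int (2 * (4 * M - A^2)) :: rat)" by simp
  then have w_sq: "w^2 = 2 * (4 * M - A^2)" by (simp only: of_int_eq_iff)
  then have "even (w^2)" by simp
  then have "even w" by simp
  then obtain w1 where w1: "w = 2 * w1" by (rule evenE)
  with w_sq have "A^2 = 2 * (2 * M - w1^2)" by (simp add: power2_eq_square algebra_simps)
  then have "even (A^2)" by simp
  then have "even A" by simp
  then obtain A1 where A1: "A = 2 * A1" by (rule evenE)
  with w_sq w1 have "w1^2 = 2 * (M - A1^2)" by (simp add: power2_eq_square algebra_simps)
  then have "even (w1^2)" by simp
  then have "even w1" by simp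
  then obtain w2 where "w1 = 2 * w2" by (rule evenE)
  with A A1 w w1 have "u = of_int A1" "v = of_int w2" by simp_all
  then show ?thesis by simp
qed

lemma Ints_of_trace_norm_sqrt_neg_11:
  fixes u v :: rat
  assumes "2 * u + v \<in> \<int>" and "u^2 + u * v + 3 * v^2 \<in> \<int>"
  shows "u \<in> \<int> \<and> v \<in> \<int>"
proof -
  obtain T M where T: "2 * u + v = of_int T" and M: "u^2 + u * v + 3 * v^2 = of_int M"
    using assms by (auto elim!: Ints_cases)
  have "(11 * v)^2 = 11 * (4 * (u^2 + u * v + 3 * v^2) - (2 * u + v)^2)"
    by (simp add: power2_eq_square algebra_simps)
  then have sq: "(11 * v)^2 = of_int (11 * (4 * M - T^2))" using T M by simp
  have "(11 * v)^2 \<in> \<int>" unfolding sq by (rule Ints_of_int)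
  then have "11 * v \<in> \<int>" by (rule rat_Ints_of_square_Ints)
  then obtain w where w: "11 * v = of_int w" by (auto elim: Ints_cases)
  with sq have "of_int (w^2) = (of_int (11 * (4 * M - T^2)) :: rat)" by simp
  then have w_sq: "w^2 = 11 * (4 * M - T^2)" by (simp only: of_int_eq_iff)
  have "prime (11 :: int)" by (simp add: prime_int_numeral_eq prime_nat_iff' atLeastLessThan_nat_numeral)
  moreover have "11 dvd w^2" by (simp add: w_sq)
  ultimately have "11 dvd w" by (rule prime_dvd_power_int)
  then obtain B where B: "w = 11 * B" by (rule dvdE)
  with w_sq have "T^2 + 11 * B^2 = 2 * (2 * M)" by (simp add: power2_eq_square algebra_simps)
  then have "even (T^2 + 11 * B^2)" by simp
  then have "even (T - B)" by auto
  then obtain a where "T - B = 2 * a" by (rule evenE)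
  with T w B have "u = of_int a" "v = of_int B" by (simp_all add: field_simps)
  then show ?thesis by simp
qed

lemma ring_of_integers_imag_sqrt_2:
  "zring (\<i> * of_real (sqrt 2)) = {z \<in> qfield (\<i> * of_real (sqrt 2)). algebraic_int z}"
proof (rule zring_eq_algebraic_ints)
  show "\<i> * complex_of_real (sqrt 2) \<notin> \<real>" by (simp add: complex_is_Real_iff)
  show "(\<i> * complex_of_real (sqrt 2))^2 = of_int 0 * (\<i> * complex_of_real (sqrt 2)) - of_int 2"
    using imag_sqrt_squared[of 2] by simp
qed (rule Ints_of_trace_norm_sqrt_neg_2; simp)

lemma ring_of_integers_imag_sqrt_11:
  "zring ((1 + \<i> * of_real (sqrt 11)) / 2) = {z \<in> qfield (\<i> * of_real (sqrt 11)). algebraic_int z}"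
proof -
  define W where "W = (1 + \<i> * complex_of_real (sqrt 11)) / 2"
  have W: "W \<notin> \<real>" by (simp add: W_def complex_is_Real_iff)
  have W_sq: "W^2 = of_int 1 * W - of_int 3"
    using imag_sqrt_squared[of 11] by (simp add: W_def power2_eq_square field_simps)
  then have "W^2 = of_rat 1 * W - of_rat 3" by simp
  from qfield_eq_qfield_imag_sqrt[OF W this, where c = "1/2" and k = 11]
  have "qfield W = qfield (\<i> * of_real (sqrt 11))" by (simp add: W_def power_divide)
  moreover have "zring W = {z \<in> qfield W. algebraic_int z}"
    by (rule zring_eq_algebraic_ints[OF W W_sq]) (rule Ints_of_trace_norm_sqrt_neg_11; simp)
  ultimately show ?thesis by (simp add: W_def)
qed

theorem proposition6p5:
  shows "(\<forall>X :: complex. imag_quadratic X \<and> spm1_generator X \<longrightarrow>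
            qfield X = qfield (\<i> * of_real (sqrt 2)) \<or>
            qfield X = qfield (\<i> * of_real (sqrt 3)) \<or>
            qfield X = qfield (\<i> * of_real (sqrt 11)))
       \<and> spm1_generator (1 + \<i> * of_real (sqrt 2))
       \<and> zring (1 + \<i> * of_real (sqrt 2)) = zring (\<i> * of_real (sqrt 2))
       \<and> zring (\<i> * of_real (sqrt 2)) = {z \<in> qfield (\<i> * of_real (sqrt 2)). algebraic_int z}
       \<and> spm1_generator (\<i> * of_real (sqrt 3))
       \<and> spm1_generator ((1 + \<i> * of_real (sqrt 11)) / 2)
       \<and> zring ((1 + \<i> * of_real (sqrt 11)) / 2) = {z \<in> qfield (\<i> * of_real (sqrt 11)). algebraic_int z}"
proof (intro conjI allI impI ring_of_integers_imag_sqrt_2 ring_of_integers_imag_sqrt_11)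
  fix X :: complex
  assume "imag_quadratic X \<and> spm1_generator X"
  then show "qfield X = qfield (\<i> * of_real (sqrt 2)) \<or> qfield X = qfield (\<i> * of_real (sqrt 3))
               \<or> qfield X = qfield (\<i> * of_real (sqrt 11))"
    using qfield_of_spm1_generator by blast
next
  define Y2 where "Y2 = \<i> * complex_of_real (sqrt 2)"
  have Y2_sq: "Y2^2 = of_int 0 * Y2 - of_int 2" using imag_sqrt_squared[of 2] by (simp add: Y2_def)
  then have X_sq: "(1 + Y2)^2 = of_int 2 * (1 + Y2) - 3" by (simp add: power2_eq_square algebra_simps)
  show "spm1_generator (1 + \<i> * of_real (sqrt 2))"
    unfolding Y2_def[symmetric]
    by (rule spm1_generator_if_norm_3[OF _ X_sq]) (simp_all add: Y2_def complex_is_Real_iff)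
  show "zring (1 + \<i> * of_real (sqrt 2)) = zring (\<i> * of_real (sqrt 2))"
    using zring_1_plus[OF Y2_sq] by (simp add: Y2_def)
next
  show "spm1_generator (\<i> * of_real (sqrt 3))"
    by (rule spm1_generator_if_norm_3[of _ 0]) (simp_all add: complex_is_Real_iff imag_sqrt_squared)
next
  show "spm1_generator ((1 + \<i> * of_real (sqrt 11)) / 2)"
    by (rule spm1_generator_if_norm_3[of _ 1])
      (use imag_sqrt_squared[of 11] in \<open>simp_all add: complex_is_Real_iff power2_eq_square field_simps\<close>)
qed

end
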